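(* Let $A,\bar A,B,\bar B,C,\bar C$ be six pairwise distinct points in the real projective plane such that no four of them are collinear, and such that the three pairs $\{A,\bar A\},\{B,\bar B\},\{C,\bar C\}$ are not the pairs of opposite vertices of one and the same complete quadrilateral. Apply Schroeter's construction to these three pairs. Then all points obtained by Schroeter's construction (including $A,\bar A,B,\bar B,C,\bar C$) lie on one and the same cubic curve.
   Context: Notation: for distinct points $P,Q$, $PQ$ is the line through them; for distinct lines $l_1,l_2$, $l_1\wedge l_2$ is their intersection point. Schroeter's construction: one starts with the three pairs of points $\{A,\bar A\},\{B,\bar B\},\{C,\bar C\}$. Whenever $\{P,\bar P\}$ and $\{Q,\bar Q\}$ are two (different) pairs already obtained, one forms the new pair $\{S,\bar S\}$ with $S:=PQ\wedge \bar P\bar Q$ and $\bar S:=P\bar Q\wedge \bar PQ$, and adds it to the collection of pairs; this is iterated. The points obtained are all points belonging to pairs produced in this way. *)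

theory Defs
  imports "HOL-Analysis.Analysis" "HOL-Analysis.Cross3"
begin

type_synonym pt = "real^3"

text \<open>Real projective plane via homogeneous coordinates: a point is represented by a
  nonzero vector of real^3, two representatives denote the same point iff their cross
  product vanishes.  The line through distinct points P, Q has coordinate vector
  cross3 P Q, and the intersection of distinct lines l, m is cross3 l m.\<close>

definition proj_point :: "pt \<Rightarrow> bool" where
  "proj_point p \<longleftrightarrow> p \<noteq> 0"

definition proj_eq :: "pt \<Rightarrow> pt \<Rightarrow> bool" where
  "proj_eq p q \<longleftrightarrow> cross3 p q = 0"

definition line_through :: "pt \<Rightarrow> pt \<Rightarrow> pt" where
  "line_through p q = cross3 p q"

definition meet :: "pt \<Rightarrow> pt \<Rightarrow> pt" where
  "meet l m = cross3 l m"

definition proj_collinear :: "pt set \<Rightarrow> bool" where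
  "proj_collinear S \<longleftrightarrow> (\<exists>l::pt. l \<noteq> 0 \<and> (\<forall>p\<in>S. l \<bullet> p = 0))"

definition pair_eq :: "pt \<times> pt \<Rightarrow> pt \<times> pt \<Rightarrow> bool" where
  "pair_eq X Y \<longleftrightarrow>
     (proj_eq (fst X) (fst Y) \<and> proj_eq (snd X) (snd Y)) \<or>
     (proj_eq (fst X) (snd Y) \<and> proj_eq (snd X) (fst Y))"

text \<open>Complete quadrilateral: four lines, no three concurrent; its three pairs of
  opposite vertices are (l1/\l2, l3/\l4), (l1/\l3, l2/\l4), (l1/\l4, l2/\l3).\<close>
definition complete_quadrilateral :: "pt \<Rightarrow> pt \<Rightarrow> pt \<Rightarrow> pt \<Rightarrow> bool" where
  "complete_quadrilateral l1 l2 l3 l4 \<longleftrightarrow>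
     l1 \<noteq> 0 \<and> l2 \<noteq> 0 \<and> l3 \<noteq> 0 \<and> l4 \<noteq> 0 \<and>
     cross3 l1 l2 \<bullet> l3 \<noteq> 0 \<and> cross3 l1 l2 \<bullet> l4 \<noteq> 0 \<and>
     cross3 l1 l3 \<bullet> l4 \<noteq> 0 \<and> cross3 l2 l3 \<bullet> l4 \<noteq> 0"

definition quad_opposite_pairs ::
  "pt \<Rightarrow> pt \<Rightarrow> pt \<Rightarrow> pt \<Rightarrow> (pt \<times> pt) list" where
  "quad_opposite_pairs l1 l2 l3 l4 =
     [(meet l1 l2, meet l3 l4), (meet l1 l3, meet l2 l4), (meet l1 l4, meet l2 l3)]"

definition opposite_vertex_pairs ::
  "pt \<times> pt \<Rightarrow> pt \<times> pt \<Rightarrow> pt \<times> pt \<Rightarrow> bool" where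
  "opposite_vertex_pairs X Y Z \<longleftrightarrow>
     (\<exists>l1 l2 l3 l4. complete_quadrilateral l1 l2 l3 l4 \<and>
        (\<forall>G\<in>{X, Y, Z}. \<exists>Q\<in>set (quad_opposite_pairs l1 l2 l3 l4). pair_eq G Q) \<and>
        (\<forall>Q\<in>set (quad_opposite_pairs l1 l2 l3 l4). \<exists>G\<in>{X, Y, Z}. pair_eq G Q))"

text \<open>Schroeter's construction, as a set of ordered pairs (P, Pbar) (both orientations
  of each base pair are included, hence of every constructed pair).\<close>
inductive_set schroeter ::
  "pt \<Rightarrow> pt \<Rightarrow> pt \<Rightarrow> pt \<Rightarrow> pt \<Rightarrow> pt \<Rightarrow> (pt \<times> pt) set"
  for A Ab B Bb C Cb
where
  baseA: "(A, Ab) \<in> schroeter A Ab B Bb C Cb"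
| baseA': "(Ab, A) \<in> schroeter A Ab B Bb C Cb"
| baseB: "(B, Bb) \<in> schroeter A Ab B Bb C Cb"
| baseB': "(Bb, B) \<in> schroeter A Ab B Bb C Cb"
| baseC: "(C, Cb) \<in> schroeter A Ab B Bb C Cb"
| baseC': "(Cb, C) \<in> schroeter A Ab B Bb C Cb"
| step: "\<lbrakk> (P, Pb) \<in> schroeter A Ab B Bb C Cb; (Q, Qb) \<in> schroeter A Ab B Bb C Cb;
           \<not> pair_eq (P, Pb) (Q, Qb);
           \<not> proj_eq P Q; \<not> proj_eq Pb Qb; \<not> proj_eq P Qb; \<not> proj_eq Pb Q;
           meet (line_through P Q) (line_through Pb Qb) \<noteq> 0;
           meet (line_through P Qb) (line_through Pb Q) \<noteq> 0 \<rbrakk> \<Longrightarrow>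
         (meet (line_through P Q) (line_through Pb Qb),
          meet (line_through P Qb) (line_through Pb Q)) \<in> schroeter A Ab B Bb C Cb"

text \<open>Cubic curves: zero sets of nonzero homogeneous cubic forms in the homogeneous
  coordinates, given by coefficients on the ten monomials x^i y^j z^k, i+j+k=3.\<close>
definition cubic_monomials :: "(nat \<times> nat \<times> nat) set" where
  "cubic_monomials = {(i, j, k). i + j + k = 3}"

definition cubic_form :: "(nat \<times> nat \<times> nat \<Rightarrow> real) \<Rightarrow> pt \<Rightarrow> real" where
  "cubic_form c p = (\<Sum>(i, j, k)\<in>cubic_monomials. c (i, j, k) * p$1 ^ i * p$2 ^ j * p$3 ^ k)"

definition nonzero_cubic :: "(nat \<times> nat \<times> nat \<Rightarrow> real) \<Rightarrow> bool" where
  "nonzero_cubic c \<longleftrightarrow> (\<exists>m\<in>cubic_monomials. c m \<noteq> 0)"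

end

theory Submission
  imports Defs
begin

text \<open>If (P, Pb) and (Q, Qb) are conjugate for a
  symmetric form M, so are the diagonal points PQ meet PbQb and PQb meet PbQ of the quadrangle
  P, Q, Pb, Qb (Hesse).  Hence every pair produced by Schroeter's construction is conjugate
  for the whole net N of symmetric forms for which (A, Ab), (B, Bb), (C, Cb) are conjugate.
  If M1, M2, M3 in N satisfy Mi X = e_i at some point X, then the Jacobian
  F Y = det (M1 Y, M2 Y, M3 Y) is a cubic with F X = 1 that vanishes at every constructed
  point P: the vectors Mi P all lie in the plane orthogonal to the partner Pb.  Such an X
  exists as soon as no nonzero member of N has X in its kernel, and under the hypotheses
  (no four points collinear, not the opposite vertices of a complete quadrilateral) an explicit
  X is found by a case analysis on the collinear triples among the six points.\<close>

section \<open>Brackets and symmetric bilinear forms\<close>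

definition bracket :: "pt \<Rightarrow> pt \<Rightarrow> pt \<Rightarrow> real" where
  "bracket a b c = a \<bullet> cross3 b c"

lemma cross3_components:
  "cross3 a b $ 1 = a$2 * b$3 - a$3 * b$2"
  "cross3 a b $ 2 = a$3 * b$1 - a$1 * b$3"
  "cross3 a b $ 3 = a$1 * b$2 - a$2 * b$1"
  by (simp_all add: cross3_def)

lemma bracket_expand:
  "bracket a b c = a$1 * (b$2 * c$3 - b$3 * c$2) + a$2 * (b$3 * c$1 - b$1 * c$3)
                 + a$3 * (b$1 * c$2 - b$2 * c$1)"
  by (simp add: bracket_def cross3_def inner_vec_def sum_3)

lemma bracket_perm:
  "bracket a b c = - bracket b a c" "bracket a b c = - bracket a c b"
  "bracket a b c = bracket b c a" "bracket a b c = bracket c a b"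
  by (simp_all add: bracket_expand algebra_simps)

lemma cross3_inner_eq_bracket: "cross3 a b \<bullet> c = bracket a b c"
  by (simp add: bracket_expand cross3_components inner_vec_def sum_3 algebra_simps)

lemma cross3_cross3:
  "cross3 (cross3 w x) (cross3 y z) = bracket w x z *\<^sub>R y - bracket w x y *\<^sub>R z"
  by (simp add: vec_eq_iff forall_3 cross3_components bracket_expand algebra_simps)

lemma bracket_cramer:
  "bracket U W Z *\<^sub>R V = bracket V W Z *\<^sub>R U + bracket U V Z *\<^sub>R W + bracket U W V *\<^sub>R Z"
  by (simp add: vec_eq_iff forall_3 bracket_expand algebra_simps)

lemma bracket_linear_left:
  "bracket (\<Sum>i\<in>I. x i *\<^sub>R u i) b c = (\<Sum>i\<in>I. x i * bracket (u i) b c)"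
  by (simp add: bracket_def inner_sum_left)

lemma bracket_linear_middle:
  "bracket a (\<Sum>i\<in>I. x i *\<^sub>R u i) c = (\<Sum>i\<in>I. x i * bracket a (u i) c)"
proof -
  have "bracket a (\<Sum>i\<in>I. x i *\<^sub>R u i) c = - (\<Sum>i\<in>I. x i * bracket (u i) a c)"
    using bracket_perm(1)[of a "\<Sum>i\<in>I. x i *\<^sub>R u i" c] by (simp add: bracket_linear_left)
  also have "\<dots> = (\<Sum>i\<in>I. x i * bracket a (u i) c)"
    by (simp add: bracket_perm(1)[of a _ c] sum_negf)
  finally show ?thesis .
qed

lemma bracket_linear_right:
  "bracket a b (\<Sum>i\<in>I. x i *\<^sub>R u i) = (\<Sum>i\<in>I. x i * bracket a b (u i))"
  by (simp add: cross3_inner_eq_bracket[symmetric] inner_sum_right)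

lemma bracket_eq_0_if_orthogonal:
  assumes "n \<noteq> 0" "n \<bullet> u = 0" "n \<bullet> v = 0" "n \<bullet> w = 0"
  shows "bracket u v w = 0"
proof -
  have "bracket u v w *\<^sub>R n
          = (n \<bullet> u) *\<^sub>R cross3 v w + (n \<bullet> v) *\<^sub>R cross3 w u + (n \<bullet> w) *\<^sub>R cross3 u v"
    by (simp add: vec_eq_iff forall_3 bracket_expand cross3_components inner_vec_def sum_3
        algebra_simps)
  with assms show ?thesis by simp
qed

lemma proj_collinear_3_iff: "proj_collinear {x, y, z} \<longleftrightarrow> bracket x y z = 0"
proof
  assume "proj_collinear {x, y, z}"
  then obtain l where "l \<noteq> 0" "l \<bullet> x = 0" "l \<bullet> y = 0" "l \<bullet> z = 0"
    by (auto simp: proj_collinear_def)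
  then show "bracket x y z = 0"
    by (rule bracket_eq_0_if_orthogonal)
next
  assume "bracket x y z = 0"
  define A :: "real^3^3" where "A = vector [x, y, z]"
  have "det A = 0"
    using \<open>bracket x y z = 0\<close> by (simp add: A_def bracket_def dot_cross_det)
  then obtain l where "l \<noteq> 0" "A *v l = 0"
    using invertible_det_nz invertible_left_inverse matrix_left_invertible_ker by metis
  moreover have "(A *v l) $ 1 = l \<bullet> x" "(A *v l) $ 2 = l \<bullet> y" "(A *v l) $ 3 = l \<bullet> z"
    by (simp_all add: A_def matrix_vector_mult_def inner_vec_def sum_3 mult.commute)
  ultimately show "proj_collinear {x, y, z}"
    unfolding proj_collinear_def by (metis insert_iff empty_iff zero_index)
qed

lemma proj_collinear_through_two:
  assumes "cross3 x y \<noteq> 0" "proj_collinear {x, y, z}" "proj_collinear {x, y, w}"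
  shows "proj_collinear {x, y, z, w}"
proof -
  have "bracket x y z = 0" "bracket x y w = 0"
    using assms(2,3) by (simp_all add: proj_collinear_3_iff)
  moreover have "bracket x y x = 0" "bracket x y y = 0"
    by (simp_all add: bracket_expand algebra_simps)
  ultimately show ?thesis
    unfolding proj_collinear_def using assms(1)
    by (intro exI[of _ "cross3 x y"]) (auto simp: cross3_inner_eq_bracket)
qed

definition polar :: "real^3^3 \<Rightarrow> pt \<Rightarrow> pt \<Rightarrow> real" where
  "polar M u v = u \<bullet> (M *v v)"

definition symmetric_matrix :: "real^3^3 \<Rightarrow> bool" where
  "symmetric_matrix M \<longleftrightarrow> transpose M = M"

lemma polar_expand:
  "polar M u v = u$1 * (M$1$1 * v$1 + M$1$2 * v$2 + M$1$3 * v$3)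
               + u$2 * (M$2$1 * v$1 + M$2$2 * v$2 + M$2$3 * v$3)
               + u$3 * (M$3$1 * v$1 + M$3$2 * v$2 + M$3$3 * v$3)"
  by (simp add: polar_def inner_vec_def matrix_vector_mult_def sum_3)

lemma symmetric_matrixD: "symmetric_matrix M \<Longrightarrow> M$i$j = M$j$i"
  unfolding symmetric_matrix_def by (drule arg_cong[where f = "\<lambda>N. N$j$i"]) (simp add: transpose_def)

lemma polar_commute: "symmetric_matrix M \<Longrightarrow> polar M u v = polar M v u"
  by (simp add: polar_expand symmetric_matrixD[of M 1 2] symmetric_matrixD[of M 1 3]
      symmetric_matrixD[of M 2 3] algebra_simps)

lemma polar_add_left: "polar M (u + w) v = polar M u v + polar M w v"
  and polar_diff_left: "polar M (u - w) v = polar M u v - polar M w v"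
  and polar_scaleR_left: "polar M (a *\<^sub>R u) v = a * polar M u v"
  and polar_add_right: "polar M v (u + w) = polar M v u + polar M v w"
  and polar_diff_right: "polar M v (u - w) = polar M v u - polar M v w"
  and polar_scaleR_right: "polar M v (a *\<^sub>R u) = a * polar M v u"
  by (simp_all add: polar_expand algebra_simps)

lemmas polar_linear = polar_add_left polar_diff_left polar_scaleR_left
  polar_add_right polar_diff_right polar_scaleR_right

lemma polar_kernel: "symmetric_matrix M \<Longrightarrow> M *v X = 0 \<Longrightarrow> polar M X v = 0"
  by (metis polar_commute polar_def inner_zero_right)

lemma polar_eq_0_if_spanning:
  assumes "bracket U W Z \<noteq> 0" "polar M Y U = 0" "polar M Y W = 0" "polar M Y Z = 0"
  shows "polar M Y v = 0"
proof -
  have "bracket U W Z * polar M Y v = polar M Y (bracket U W Z *\<^sub>R v)"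
    by (simp add: polar_linear)
  also have "\<dots> = 0"
    unfolding bracket_cramer[of U W Z v] by (simp add: polar_linear assms)
  finally show ?thesis using assms(1) by simp
qed

lemma matrix_eq_0_if_polar_spanning:
  assumes "bracket U W Z \<noteq> 0" "\<And>v. polar M U v = 0" "\<And>v. polar M W v = 0" "\<And>v. polar M Z v = 0"
  shows "M = 0"
proof -
  have "polar M u v = 0" for u v
  proof -
    have "bracket U W Z * polar M u v = polar M (bracket U W Z *\<^sub>R u) v"
      by (simp add: polar_linear)
    also have "\<dots> = 0"
      unfolding bracket_cramer[of U W Z u] by (simp add: polar_linear assms)
    finally show ?thesis using assms(1) by simp
  qed
  moreover have "M$i$j = polar M (axis i 1) (axis j 1)" for i j
    using exhaust_3[of i] exhaust_3[of j] by (auto simp: polar_expand axis_def)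
  ultimately show ?thesis
    by (simp add: vec_eq_iff)
qed

lemma matrix_vector_mult_components:
  "((M::real^3^3) *v x) $ i = M$i$1 * x$1 + M$i$2 * x$2 + M$i$3 * x$3"
  by (simp add: matrix_vector_mult_def sum_3)

section \<open>Schroeter's step preserves conjugacy\<close>

definition conjugacy_net :: "pt \<Rightarrow> pt \<Rightarrow> pt \<Rightarrow> pt \<Rightarrow> pt \<Rightarrow> pt \<Rightarrow> (real^3^3) set" where
  "conjugacy_net A Ab B Bb C Cb =
     {M. symmetric_matrix M \<and> polar M A Ab = 0 \<and> polar M B Bb = 0 \<and> polar M C Cb = 0}"

text \<open>S and Sb each lie on two sides of the quadrangle P, Q, Pb, Qb, so each has two
  expansions in these points.  Writing 2 Sb as the sum of its two expansions and pairing each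
  half with a suitable expansion of S, all terms except M(P, Pb) and M(Q, Qb) cancel by the
  symmetry of M.\<close>
lemma polar_schroeter_step:
  assumes "symmetric_matrix M"
  shows "polar M (cross3 (cross3 P Q) (cross3 Pb Qb)) (cross3 (cross3 P Qb) (cross3 Pb Q)) =
           bracket P Q Qb * bracket Q Pb Qb * polar M P Pb
         - bracket P Q Pb * bracket P Pb Qb * polar M Q Qb"
proof -
  define S Sb where "S = cross3 (cross3 P Q) (cross3 Pb Qb)" and "Sb = cross3 (cross3 P Qb) (cross3 Pb Q)"
  define k1 k2 k3 k4 where "k1 = bracket P Q Qb" and "k2 = bracket P Q Pb"
    and "k3 = bracket P Pb Qb" and "k4 = bracket Q Pb Qb"
  have S1: "S = k1 *\<^sub>R Pb - k2 *\<^sub>R Qb"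
    unfolding S_def k1_def k2_def by (rule cross3_cross3)
  have S2: "S = k3 *\<^sub>R Q - k4 *\<^sub>R P"
    unfolding S_def k3_def k4_def
    by (simp add: vec_eq_iff forall_3 cross3_components bracket_expand algebra_simps)
  have Sb: "2 *\<^sub>R Sb = (k4 *\<^sub>R P + k3 *\<^sub>R Q) - (k1 *\<^sub>R Pb + k2 *\<^sub>R Qb)"
    unfolding Sb_def k1_def k2_def k3_def k4_def
    by (simp add: vec_eq_iff forall_3 cross3_components bracket_expand algebra_simps)
  have "2 * polar M S Sb = polar M S (2 *\<^sub>R Sb)"
    by (simp add: polar_scaleR_right)
  also have "\<dots> = polar M S (k4 *\<^sub>R P + k3 *\<^sub>R Q) - polar M S (k1 *\<^sub>R Pb + k2 *\<^sub>R Qb)"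
    unfolding Sb by (rule polar_diff_right)
  also have "\<dots> = polar M (k1 *\<^sub>R Pb - k2 *\<^sub>R Qb) (k4 *\<^sub>R P + k3 *\<^sub>R Q)
                   - polar M (k3 *\<^sub>R Q - k4 *\<^sub>R P) (k1 *\<^sub>R Pb + k2 *\<^sub>R Qb)"
    using S1 S2 by simp
  also have "\<dots> = 2 * (k1 * k4 * polar M P Pb - k2 * k3 * polar M Q Qb)"
    using polar_commute[OF assms, of Pb P] polar_commute[OF assms, of Pb Q]
      polar_commute[OF assms, of Qb P] polar_commute[OF assms, of Qb Q]
    by (simp add: polar_linear algebra_simps)
  finally show ?thesis
    unfolding S_def Sb_def k1_def k2_def k3_def k4_def by simp
qed

lemma schroeter_nonzero:
  assumes "(P, Pb) \<in> schroeter A Ab B Bb C Cb"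
    and "A \<noteq> 0" "Ab \<noteq> 0" "B \<noteq> 0" "Bb \<noteq> 0" "C \<noteq> 0" "Cb \<noteq> 0"
  shows "P \<noteq> 0 \<and> Pb \<noteq> 0"
  using assms by (induction rule: schroeter.induct) auto

lemma schroeter_conjugate:
  assumes "(P, Pb) \<in> schroeter A Ab B Bb C Cb" and "M \<in> conjugacy_net A Ab B Bb C Cb"
  shows "polar M P Pb = 0"
  using assms
proof (induction rule: schroeter.induct)
  case (step P Pb Q Qb)
  then show ?case
    by (simp add: meet_def line_through_def polar_schroeter_step conjugacy_net_def)
qed (auto simp: conjugacy_net_def polar_commute)

section \<open>The Jacobian cubic of the net\<close>

lemma cubic_monomials_eq:
  "cubic_monomials =
     {(3,0,0), (2,1,0), (2,0,1), (1,2,0), (1,1,1), (1,0,2), (0,3,0), (0,2,1), (0,1,2), (0,0,3)}"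
    (is "_ = ?S")
proof (intro set_eqI iffI)
  fix m assume "m \<in> cubic_monomials"
  then obtain i j k where m: "m = (i, j, k)" "i + j + k = 3"
    by (auto simp: cubic_monomials_def)
  then have "i = 0 \<or> i = 1 \<or> i = 2 \<or> i = 3" "j = 0 \<or> j = 1 \<or> j = 2 \<or> j = 3"
    by arith+
  with m show "m \<in> ?S" by (elim disjE) auto
next
  fix m assume "m \<in> ?S"
  then show "m \<in> cubic_monomials" by (auto simp: cubic_monomials_def)
qed

lemma finite_cubic_monomials: "finite cubic_monomials"
  by (simp add: cubic_monomials_eq)

definition multidegree :: "3 \<times> 3 \<times> 3 \<Rightarrow> nat \<times> nat \<times> nat" where
  "multidegree t = (case t of (a, b, d) \<Rightarrow>
     let n = (\<lambda>i. of_bool (a = i) + of_bool (b = i) + of_bool (d = i)) in (n 1, n 2, n 3))"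

definition trilinear_coeffs :: "(3 \<times> 3 \<times> 3 \<Rightarrow> real) \<Rightarrow> nat \<times> nat \<times> nat \<Rightarrow> real" where
  "trilinear_coeffs K m = (\<Sum>t\<in>UNIV. if multidegree t = m then K t else 0)"

lemma multidegree_in_cubic_monomials: "multidegree t \<in> cubic_monomials"
proof -
  obtain a b d where "t = (a, b, d)" by (cases t)
  then show ?thesis
    using exhaust_3[of a] exhaust_3[of b] exhaust_3[of d]
    by (auto simp: multidegree_def cubic_monomials_def)
qed

lemma monomial_multidegree:
  fixes Y :: "real^3"
  shows "(case multidegree (a, b, d) of (i, j, k) \<Rightarrow> Y$1 ^ i * Y$2 ^ j * Y$3 ^ k) = Y$a * Y$b * Y$d"
  using exhaust_3[of a] exhaust_3[of b] exhaust_3[of d]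
  by (auto simp: multidegree_def power2_eq_square power3_eq_cube)

lemma sum_UNIV_triple: "(\<Sum>t\<in>UNIV. f t) = (\<Sum>a\<in>UNIV. \<Sum>b\<in>UNIV. \<Sum>d\<in>UNIV. f (a, b, d))"
  by (simp add: sum.cartesian_product)

lemma cubic_form_trilinear_coeffs:
  "cubic_form (trilinear_coeffs K) Y =
     (\<Sum>a\<in>UNIV. \<Sum>b\<in>UNIV. \<Sum>d\<in>UNIV. K (a, b, d) * Y$a * Y$b * Y$d)"
proof -
  let ?mono = "\<lambda>(i, j, k). Y$1 ^ i * Y$2 ^ j * Y$3 ^ k"
  have "cubic_form (trilinear_coeffs K) Y =
          (\<Sum>m\<in>cubic_monomials. \<Sum>t\<in>UNIV. if multidegree t = m then K t * ?mono m else 0)"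
    unfolding cubic_form_def trilinear_coeffs_def sum_distrib_right
    by (auto simp: mult.assoc intro!: sum.cong)
  also have "\<dots> = (\<Sum>t\<in>UNIV. K t * ?mono (multidegree t))"
    by (subst sum.swap) (simp add: finite_cubic_monomials multidegree_in_cubic_monomials)
  also have "\<dots> = (\<Sum>a\<in>UNIV. \<Sum>b\<in>UNIV. \<Sum>d\<in>UNIV. K (a, b, d) * Y$a * Y$b * Y$d)"
    unfolding sum_UNIV_triple monomial_multidegree by (simp add: mult.assoc)
  finally show ?thesis .
qed

lemma nonzero_cubicI:
  assumes "cubic_form c X \<noteq> 0"
  shows "nonzero_cubic c"
proof (rule ccontr)
  assume "\<not> nonzero_cubic c"
  then have "\<forall>m\<in>cubic_monomials. c m = 0"
    by (simp add: nonzero_cubic_def)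
  then have "cubic_form c X = 0"
    unfolding cubic_form_def by (intro sum.neutral) auto
  with assms show False by simp
qed

lemma bracket_matrix_vector_trilinear:
  fixes M1 M2 M3 :: "real^3^3"
  shows "bracket (M1 *v Y) (M2 *v Y) (M3 *v Y) =
     (\<Sum>a\<in>UNIV. \<Sum>b\<in>UNIV. \<Sum>d\<in>UNIV.
        bracket (column a M1) (column b M2) (column d M3) * Y$a * Y$b * Y$d)"
proof -
  have "bracket (M1 *v Y) (M2 *v Y) (M3 *v Y) =
          (\<Sum>a\<in>UNIV. \<Sum>b\<in>UNIV. \<Sum>d\<in>UNIV.
             Y$a * (Y$b * (Y$d * bracket (column a M1) (column b M2) (column d M3))))"
    unfolding matrix_mult_sum scalar_mult_eq_scaleR
    unfolding bracket_linear_left unfolding bracket_linear_middle unfolding bracket_linear_right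
    by (simp add: sum_distrib_left)
  also have "\<dots> = (\<Sum>a\<in>UNIV. \<Sum>b\<in>UNIV. \<Sum>d\<in>UNIV.
                     bracket (column a M1) (column b M2) (column d M3) * Y$a * Y$b * Y$d)"
    by (intro sum.cong refl) (simp only: mult_ac)
  finally show ?thesis .
qed

lemma jacobian_cubic:
  fixes N :: "(real^3^3) set"
  assumes onto: "\<And>v. \<exists>M\<in>N. M *v X = v"
  obtains c where "nonzero_cubic c"
    and "\<And>P Pb. Pb \<noteq> 0 \<Longrightarrow> \<forall>M\<in>N. polar M Pb P = 0 \<Longrightarrow> cubic_form c P = 0"
proof -
  obtain M1 M2 M3 where M: "M1 \<in> N" "M2 \<in> N" "M3 \<in> N"
    and MX: "M1 *v X = axis 1 1" "M2 *v X = axis 2 1" "M3 *v X = axis 3 1"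
    using onto by meson
  define c where "c = trilinear_coeffs (\<lambda>(a, b, d). bracket (column a M1) (column b M2) (column d M3))"
  have c: "cubic_form c Y = bracket (M1 *v Y) (M2 *v Y) (M3 *v Y)" for Y
    by (simp add: c_def cubic_form_trilinear_coeffs bracket_matrix_vector_trilinear)
  have "cubic_form c X = 1"
    unfolding c MX by (simp add: bracket_expand axis_def)
  then have "nonzero_cubic c"
    by (intro nonzero_cubicI[of c X]) simp
  moreover have "cubic_form c P = 0" if "Pb \<noteq> 0" "\<forall>M\<in>N. polar M Pb P = 0" for P Pb
    unfolding c using that M
    by (intro bracket_eq_0_if_orthogonal[of Pb]) (auto simp: polar_def)
  ultimately show ?thesis using that by blast
qed

definition regular_point :: "(real^3^3) set \<Rightarrow> pt \<Rightarrow> bool" where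
  "regular_point N X \<longleftrightarrow> (\<forall>M\<in>N. M *v X = 0 \<longrightarrow> M = 0)"

definition sym_matrix_of :: "(real^3) \<times> (real^3) \<Rightarrow> real^3^3" where
  "sym_matrix_of p = (case p of (d, e) \<Rightarrow>
     vector [vector [d$1, e$3, e$2], vector [e$3, d$2, e$1], vector [e$2, e$1, d$3]])"

lemma sym_matrix_of_components:
  "sym_matrix_of (d, e) $1$1 = d$1" "sym_matrix_of (d, e) $1$2 = e$3" "sym_matrix_of (d, e) $1$3 = e$2"
  "sym_matrix_of (d, e) $2$1 = e$3" "sym_matrix_of (d, e) $2$2 = d$2" "sym_matrix_of (d, e) $2$3 = e$1"
  "sym_matrix_of (d, e) $3$1 = e$2" "sym_matrix_of (d, e) $3$2 = e$1" "sym_matrix_of (d, e) $3$3 = d$3"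
  by (simp_all add: sym_matrix_of_def)

lemma symmetric_sym_matrix_of: "symmetric_matrix (sym_matrix_of p)"
  by (cases p) (simp add: symmetric_matrix_def vec_eq_iff forall_3 transpose_def
      sym_matrix_of_components)

text \<open>If X is regular, the linear map from symmetric matrices (6 dimensions) to the
  values M X together with the three conjugacy conditions (3 + 3 dimensions) is
  injective, hence onto.\<close>
lemma regular_point_onto:
  assumes "regular_point (conjugacy_net A Ab B Bb C Cb) X"
  shows "\<exists>M\<in>conjugacy_net A Ab B Bb C Cb. M *v X = v"
proof -
  define f where "f p = (sym_matrix_of p *v X,
    vector [polar (sym_matrix_of p) A Ab, polar (sym_matrix_of p) B Bb, polar (sym_matrix_of p) C Cb]
      :: real^3)" for p
  have "linear f"
    by (rule linearI) (auto simp: f_def prod_eq_iff vec_eq_iff forall_3 matrix_vector_mult_components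
        sym_matrix_of_components polar_expand algebra_simps)
  moreover have "p = 0" if "f p = 0" for p
  proof -
    obtain d e where p: "p = (d, e)" by (cases p)
    have "sym_matrix_of p \<in> conjugacy_net A Ab B Bb C Cb" "sym_matrix_of p *v X = 0"
      using that symmetric_sym_matrix_of[of p]
      by (auto simp: f_def conjugacy_net_def prod_eq_iff vec_eq_iff forall_3)
    then have "sym_matrix_of p = 0"
      using assms by (auto simp: regular_point_def)
    then show "p = 0"
      unfolding p using sym_matrix_of_components[of d e]
      by (simp add: vec_eq_iff forall_3 prod_eq_iff)
  qed
  ultimately have "surj f"
    by (intro linear_inj_imp_surj) (auto simp: linear_injective_0)
  then obtain p where "f p = (v, 0)"
    by (metis surjD)
  then show ?thesis
    using symmetric_sym_matrix_of[of p]
    by (auto simp: f_def conjugacy_net_def prod_eq_iff vec_eq_iff forall_3)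
qed

lemma schroeter_on_jacobian_cubic:
  assumes "A \<noteq> 0" "Ab \<noteq> 0" "B \<noteq> 0" "Bb \<noteq> 0" "C \<noteq> 0" "Cb \<noteq> 0"
    and "regular_point (conjugacy_net A Ab B Bb C Cb) X"
  shows "\<exists>c. nonzero_cubic c \<and>
           (\<forall>(P, Pb)\<in>schroeter A Ab B Bb C Cb. cubic_form c P = 0 \<and> cubic_form c Pb = 0)"
proof -
  obtain c where c: "nonzero_cubic c"
    and vanish: "\<And>P Pb. Pb \<noteq> 0 \<Longrightarrow> \<forall>M\<in>conjugacy_net A Ab B Bb C Cb. polar M Pb P = 0 \<Longrightarrow>
                   cubic_form c P = 0"
    using jacobian_cubic regular_point_onto[OF assms(7)] by metis
  have "cubic_form c P = 0 \<and> cubic_form c Pb = 0"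
    if "(P, Pb) \<in> schroeter A Ab B Bb C Cb" for P Pb
  proof -
    have "M \<in> conjugacy_net A Ab B Bb C Cb \<Longrightarrow> polar M P Pb = 0 \<and> polar M Pb P = 0" for M
      using schroeter_conjugate[OF that] polar_commute by (auto simp: conjugacy_net_def)
    then show ?thesis
      using schroeter_nonzero[OF that assms(1-6)] vanish by blast
  qed
  with c show ?thesis by blast
qed

section \<open>Regular points in special configurations\<close>

text \<open>As X lies on PQ and on PbR, M X = 0 ties M(Q, -) to M(P, -) and M(Pb, -) to M(R, -);
  with the conjugacy conditions this makes M(P, -) and M(R, -) vanish, hence M = 0.\<close>
lemma regular_point_generic:
  assumes "\<not> proj_collinear {P, Pb, Q}" "\<not> proj_collinear {P, Pb, R}" "\<not> proj_collinear {P, Q, R}"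
    "\<not> proj_collinear {P, Q, Rb}" "\<not> proj_collinear {Pb, Q, R}" "\<not> proj_collinear {Pb, Qb, R}"
  shows "regular_point (conjugacy_net P Pb Q Qb R Rb) (meet (line_through P Q) (line_through Pb R))"
  unfolding regular_point_def
proof (intro ballI impI)
  fix M assume "M \<in> conjugacy_net P Pb Q Qb R Rb"
    and MX: "M *v meet (line_through P Q) (line_through Pb R) = 0"
  then have sy: "symmetric_matrix M"
    and hP: "polar M P Pb = 0" and hQ: "polar M Q Qb = 0" and hR: "polar M R Rb = 0"
    by (auto simp: conjugacy_net_def)
  have nz: "bracket P Pb Q \<noteq> 0" "bracket P Pb R \<noteq> 0" "bracket P Q R \<noteq> 0"
    "bracket P Q Rb \<noteq> 0" "bracket Pb Q R \<noteq> 0" "bracket Pb Qb R \<noteq> 0"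
    using assms by (simp_all add: proj_collinear_3_iff)
  define X where "X = meet (line_through P Q) (line_through Pb R)"
  have X1: "X = bracket P Pb R *\<^sub>R Q - bracket Q Pb R *\<^sub>R P"
    unfolding X_def meet_def line_through_def
    by (simp add: vec_eq_iff forall_3 cross3_components bracket_expand algebra_simps)
  have X2: "X = bracket P Q R *\<^sub>R Pb - bracket P Q Pb *\<^sub>R R"
    unfolding X_def meet_def line_through_def by (rule cross3_cross3)
  have bX: "polar M X v = 0" for v
    using polar_kernel[OF sy] MX X_def by simp
  have r1: "bracket P Pb R * polar M Q v = bracket Q Pb R * polar M P v" for v
    using bX[of v] unfolding X1 by (simp add: polar_linear)
  have r2: "bracket P Q R * polar M Pb v = bracket P Q Pb * polar M R v" for v
    using bX[of v] unfolding X2 by (simp add: polar_linear)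
  have d: "bracket P Q Pb \<noteq> 0" using nz(1) bracket_perm(2)[of P Pb Q] by simp
  have s1: "polar M R P = 0"
    using r2[of P] hP polar_commute[OF sy, of Pb P] d by simp
  have s2: "polar M P Qb = 0"
    using r1[of Qb] hQ nz(5) bracket_perm(1)[of Q Pb R] by simp
  have e1: "bracket R Qb X = bracket P Q R * bracket R Qb Pb"
    unfolding X2 by (simp add: bracket_expand algebra_simps)
  have e1': "bracket R Qb Pb \<noteq> 0"
    using nz(6) bracket_perm(4)[of Pb Qb R] bracket_perm(1)[of R Pb Qb] bracket_perm(2)[of R Qb Pb]
    by auto
  have s3: "polar M P v = 0" for v
    by (rule polar_eq_0_if_spanning[of R Qb X])
      (use e1 e1' nz(3) s1 s2 polar_commute[OF sy] bX in auto)
  have e2: "bracket P Rb X = bracket P Pb R * bracket P Rb Q"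
    unfolding X1 by (simp add: bracket_expand algebra_simps)
  have e2': "bracket P Rb Q \<noteq> 0" using nz(4) bracket_perm(2)[of P Q Rb] by simp
  have s4: "polar M R v = 0" for v
    by (rule polar_eq_0_if_spanning[of P Rb X])
      (use e2 e2' nz(2) s1 hR polar_commute[OF sy] bX in auto)
  have e3: "bracket P R X = bracket P Pb R * bracket P R Q"
    unfolding X1 by (simp add: bracket_expand algebra_simps)
  have e3': "bracket P R Q \<noteq> 0" using nz(3) bracket_perm(2)[of P Q R] by simp
  show "M = 0"
    by (rule matrix_eq_0_if_polar_spanning[of P R X]) (use e3 e3' nz(2) s3 s4 bX in auto)
qed

text \<open>Here X lies on AbBb and CCb, and the line through A, B, C lets B be expressed by
  A and C; this makes M(Ab, -) and M(C, -) vanish, hence M = 0.\<close>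
lemma regular_point_one_line:
  assumes z: "proj_collinear {A, B, C}"
    and nz: "\<not> proj_collinear {Ab, Bb, Cb}" "\<not> proj_collinear {Ab, Bb, C}" "\<not> proj_collinear {Bb, C, Cb}"
      "\<not> proj_collinear {A, B, Cb}" "\<not> proj_collinear {A, C, Cb}" "\<not> proj_collinear {Ab, C, Cb}"
  shows "regular_point (conjugacy_net A Ab B Bb C Cb) (meet (line_through Ab Bb) (line_through C Cb))"
  unfolding regular_point_def
proof (intro ballI impI)
  fix M assume "M \<in> conjugacy_net A Ab B Bb C Cb"
    and MX: "M *v meet (line_through Ab Bb) (line_through C Cb) = 0"
  then have sy: "symmetric_matrix M"
    and hA: "polar M A Ab = 0" and hB: "polar M B Bb = 0" and hC: "polar M C Cb = 0"
    by (auto simp: conjugacy_net_def)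
  have z: "bracket A B C = 0" using z by (simp add: proj_collinear_3_iff)
  have nz: "bracket Ab Bb Cb \<noteq> 0" "bracket Ab Bb C \<noteq> 0" "bracket Bb C Cb \<noteq> 0"
    "bracket A B Cb \<noteq> 0" "bracket A C Cb \<noteq> 0" "bracket Ab C Cb \<noteq> 0"
    using nz by (simp_all add: proj_collinear_3_iff)
  define X where "X = meet (line_through Ab Bb) (line_through C Cb)"
  have X1: "X = bracket Ab Bb Cb *\<^sub>R C - bracket Ab Bb C *\<^sub>R Cb"
    unfolding X_def meet_def line_through_def by (rule cross3_cross3)
  have X2: "X = bracket Ab C Cb *\<^sub>R Bb - bracket Bb C Cb *\<^sub>R Ab"
    unfolding X1 by (simp add: vec_eq_iff forall_3 bracket_expand algebra_simps)
  have bX: "polar M X v = 0" for v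
    using polar_kernel[OF sy] MX X_def by simp
  have r1: "bracket Ab Bb Cb * polar M C v = bracket Ab Bb C * polar M Cb v" for v
    using bX[of v] unfolding X1 by (simp add: polar_linear)
  have r2: "bracket Ab C Cb * polar M Bb v = bracket Bb C Cb * polar M Ab v" for v
    using bX[of v] unfolding X2 by (simp add: polar_linear)
  have t1: "polar M C C = 0"
    using r1[of C] hC polar_commute[OF sy, of Cb C] nz(1) by simp
  have t2: "polar M Ab B = 0"
    using r2[of B] hB polar_commute[OF sy, of Bb B] nz(3) by simp
  have "bracket A C Cb *\<^sub>R B = bracket B C Cb *\<^sub>R A + bracket A B Cb *\<^sub>R C"
    using bracket_cramer[of A C Cb B] z bracket_perm(2)[of A C B] by simp
  then have "polar M Ab (bracket A C Cb *\<^sub>R B) = polar M Ab (bracket B C Cb *\<^sub>R A + bracket A B Cb *\<^sub>R C)"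
    by (rule arg_cong)
  then have "bracket A C Cb * polar M Ab B = bracket B C Cb * polar M Ab A + bracket A B Cb * polar M Ab C"
    by (simp add: polar_linear)
  then have t3: "polar M Ab C = 0"
    using t2 hA polar_commute[OF sy, of Ab A] nz(4) by simp
  have e1: "bracket A C X = - (bracket Ab Bb C * bracket A C Cb)"
    unfolding X1 by (simp add: bracket_expand algebra_simps)
  have t4: "polar M Ab v = 0" for v
    by (rule polar_eq_0_if_spanning[of A C X]) (use e1 nz t3 hA polar_commute[OF sy] bX in auto)
  have e2: "bracket Ab C X = - (bracket Ab Bb C * bracket Ab C Cb)"
    unfolding X1 by (simp add: bracket_expand algebra_simps)
  have t5: "polar M C v = 0" for v
    by (rule polar_eq_0_if_spanning[of Ab C X]) (use e2 nz t3 t1 polar_commute[OF sy] bX in auto)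
  show "M = 0"
    by (rule matrix_eq_0_if_polar_spanning[of Ab C X]) (use e2 nz t4 t5 bX in auto)
qed

text \<open>Menelaus' theorem for the triangle A, Ab, Bb.\<close>
lemma menelaus_bracket:
  "bracket (b1 *\<^sub>R A + b2 *\<^sub>R Ab) (c1 *\<^sub>R A + c3 *\<^sub>R Bb) (d2 *\<^sub>R Ab + d3 *\<^sub>R Bb)
     = - bracket A Ab Bb * (b1 * c3 * d2 + b2 * c1 * d3)"
  by (simp add: bracket_expand algebra_simps)

lemma symmetric_matrix_eq_0_four_lines:
  assumes sy: "symmetric_matrix M" and basis: "bracket A Ab Bb \<noteq> 0"
    and nzs: "b1 \<noteq> 0" "b2 \<noteq> 0" "c1 \<noteq> 0" "d2 \<noteq> 0" "d3 \<noteq> 0"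
    and menelaus: "b1 * c3 * d2 + b2 * c1 * d3 = 0"
    and PA: "polar M A Ab = 0" and PB: "polar M (b1 *\<^sub>R A + b2 *\<^sub>R Ab) Bb = 0"
    and PC: "polar M (c1 *\<^sub>R A + c3 *\<^sub>R Bb) (d2 *\<^sub>R Ab + d3 *\<^sub>R Bb) = 0"
    and MX: "M *v ((b1 * d2) *\<^sub>R A + (b2 * d2) *\<^sub>R Ab + (b2 * d3) *\<^sub>R Bb) = 0"
  shows "M = 0"
proof -
  define X where "X = (b1 * d2) *\<^sub>R A + (b2 * d2) *\<^sub>R Ab + (b2 * d3) *\<^sub>R Bb"
  have bX: "polar M X v = 0" for v
    using polar_kernel[OF sy] MX unfolding X_def by simp
  define m11 m13 m22 m23 m33 where "m11 = polar M A A" and "m13 = polar M A Bb"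
    and "m22 = polar M Ab Ab" and "m23 = polar M Ab Bb" and "m33 = polar M Bb Bb"
  have sym: "polar M Ab A = 0" "polar M Bb A = m13" "polar M Bb Ab = m23"
    using PA polar_commute[OF sy] unfolding m13_def m23_def by metis+
  have E1: "b1 * d2 * m11 + b2 * d3 * m13 = 0"
    using bX[of A] polar_commute[OF sy, of X A] unfolding X_def m11_def m13_def
    by (simp add: polar_linear sym PA)
  have E2: "b2 * d2 * m22 + b2 * d3 * m23 = 0"
    using bX[of Ab] polar_commute[OF sy, of X Ab] unfolding X_def m22_def m23_def
    by (simp add: polar_linear sym)
  have E3: "b1 * d2 * m13 + b2 * d2 * m23 + b2 * d3 * m33 = 0"
    using bX[of Bb] polar_commute[OF sy, of X Bb] unfolding X_def m13_def m23_def m33_def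
    by (simp add: polar_linear sym)
  have PB: "b1 * m13 + b2 * m23 = 0"
    using PB by (simp add: polar_linear m13_def m23_def)
  have PC: "c1 * d3 * m13 + c3 * d2 * m23 + c3 * d3 * m33 = 0"
    using PC by (simp add: polar_linear sym PA m13_def m23_def m33_def algebra_simps)
  have "b2 * d3 * m33 = - d2 * (b1 * m13 + b2 * m23)" using E3 by (simp add: algebra_simps)
  then have z33: "m33 = 0" using PB nzs by simp
  have "m13 * (b2 * c1 * d3 - b1 * c3 * d2)
          = b2 * (c1 * d3 * m13 + c3 * d2 * m23) - c3 * d2 * (b1 * m13 + b2 * m23)"
    by (simp add: algebra_simps)
  also have "\<dots> = 0" using PC z33 PB by simp
  finally have "m13 * (b2 * c1 * d3 - b1 * c3 * d2) = 0" .
  moreover have "b2 * c1 * d3 - b1 * c3 * d2 = 2 * (b2 * c1 * d3)"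
    using menelaus by (simp add: algebra_simps)
  ultimately have z13: "m13 = 0" using nzs by simp
  then have z23: "m23 = 0" using PB nzs by simp
  have z11: "m11 = 0" using E1 z13 nzs by simp
  have z22: "m22 = 0" using E2 z23 nzs by simp
  have "polar M A v = 0" "polar M Ab v = 0" "polar M Bb v = 0" for v
    using basis PA z11 z13 z22 z23 z33 sym
    by (auto intro!: polar_eq_0_if_spanning[of A Ab Bb] simp: m11_def m13_def m22_def m23_def m33_def)
  then show "M = 0"
    using basis by (intro matrix_eq_0_if_polar_spanning[of A Ab Bb]) auto
qed

lemma regular_point_four_lines:
  assumes z: "proj_collinear {A, Ab, B}" "proj_collinear {A, Bb, C}" "proj_collinear {Ab, Bb, Cb}"
      "proj_collinear {B, C, Cb}"
    and nz: "\<not> proj_collinear {A, Ab, Bb}" "\<not> proj_collinear {B, Ab, Bb}" "\<not> proj_collinear {A, B, Bb}"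
      "\<not> proj_collinear {C, Ab, Bb}" "\<not> proj_collinear {A, Cb, Bb}" "\<not> proj_collinear {A, Ab, Cb}"
  shows "regular_point (conjugacy_net A Ab B Bb C Cb)
           ((bracket B Ab Bb * bracket A Cb Bb) *\<^sub>R A + (bracket A B Bb * bracket A Cb Bb) *\<^sub>R Ab
            + (bracket A B Bb * bracket A Ab Cb) *\<^sub>R Bb)"
  unfolding regular_point_def
proof (intro ballI impI)
  have z: "bracket A Ab B = 0" "bracket A Bb C = 0" "bracket Ab Bb Cb = 0" "bracket B C Cb = 0"
    using z by (simp_all add: proj_collinear_3_iff)
  have nz: "bracket A Ab Bb \<noteq> 0" "bracket B Ab Bb \<noteq> 0" "bracket A B Bb \<noteq> 0"
    "bracket C Ab Bb \<noteq> 0" "bracket A Cb Bb \<noteq> 0" "bracket A Ab Cb \<noteq> 0"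
    using nz by (simp_all add: proj_collinear_3_iff)
  define k b1 b2 c1 c3 d2 d3 where "k = bracket A Ab Bb"
    and "b1 = bracket B Ab Bb" and "b2 = bracket A B Bb" and "c1 = bracket C Ab Bb"
    and "c3 = bracket A Ab C" and "d2 = bracket A Cb Bb" and "d3 = bracket A Ab Cb"
  fix M assume "M \<in> conjugacy_net A Ab B Bb C Cb"
    and MX: "M *v ((b1 * d2) *\<^sub>R A + (b2 * d2) *\<^sub>R Ab + (b2 * d3) *\<^sub>R Bb) = 0"
  then have sy: "symmetric_matrix M"
    and hA: "polar M A Ab = 0" and hB: "polar M B Bb = 0" and hC: "polar M C Cb = 0"
    by (auto simp: conjugacy_net_def)
  have kB: "k *\<^sub>R B = b1 *\<^sub>R A + b2 *\<^sub>R Ab"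
    using bracket_cramer[of A Ab Bb B] z(1) unfolding k_def b1_def b2_def by simp
  have kC: "k *\<^sub>R C = c1 *\<^sub>R A + c3 *\<^sub>R Bb"
    using bracket_cramer[of A Ab Bb C] z(2) bracket_perm(2)[of A C Bb] unfolding k_def c1_def c3_def
    by simp
  have kCb: "k *\<^sub>R Cb = d2 *\<^sub>R Ab + d3 *\<^sub>R Bb"
    using bracket_cramer[of A Ab Bb Cb] z(3) bracket_perm(3)[of Cb Ab Bb] unfolding k_def d2_def d3_def
    by simp
  have PB: "polar M (b1 *\<^sub>R A + b2 *\<^sub>R Ab) Bb = 0"
    unfolding kB[symmetric] using hB by (simp add: polar_scaleR_left)
  have PC: "polar M (c1 *\<^sub>R A + c3 *\<^sub>R Bb) (d2 *\<^sub>R Ab + d3 *\<^sub>R Bb) = 0"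
    unfolding kC[symmetric] kCb[symmetric] using hC by (simp add: polar_scaleR_left polar_scaleR_right)
  have nzs: "b1 \<noteq> 0" "b2 \<noteq> 0" "c1 \<noteq> 0" "d2 \<noteq> 0" "d3 \<noteq> 0"
    using nz unfolding b1_def b2_def c1_def d2_def d3_def by auto
  have "bracket (k *\<^sub>R B) (k *\<^sub>R C) (k *\<^sub>R Cb) = k^3 * bracket B C Cb"
    by (simp add: bracket_expand algebra_simps power3_eq_cube)
  then have "k * (b1 * c3 * d2 + b2 * c1 * d3) = 0"
    using z(4) by (simp add: kB kC kCb menelaus_bracket flip: k_def)
  then have menelaus: "b1 * c3 * d2 + b2 * c1 * d3 = 0"
    using nz(1) by (simp add: k_def)
  show "M = 0"
    by (rule symmetric_matrix_eq_0_four_lines[OF sy nz(1) nzs menelaus hA PB PC MX])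
qed

lemma conjugacy_net_relabel:
  assumes "{{P, Pb}, {Q, Qb}, {R, Rb}} = {{A, Ab}, {B, Bb}, {C, Cb}}"
  shows "conjugacy_net P Pb Q Qb R Rb = conjugacy_net A Ab B Bb C Cb"
proof -
  have net: "M \<in> conjugacy_net A Ab B Bb C Cb \<longleftrightarrow>
      symmetric_matrix M \<and>
      (\<forall>e\<in>{{A, Ab}, {B, Bb}, {C, Cb}}. \<forall>p q. e = {p, q} \<longrightarrow> polar M p q = 0)"
    for A Ab B Bb C Cb M
    by (auto simp: conjugacy_net_def doubleton_eq_iff polar_commute)
  show ?thesis
    by (simp add: set_eq_iff net assms)
qed

section \<open>Complete quadrilaterals and the case analysis\<close>

lemma proj_eq_meet:
  assumes "l \<bullet> P = 0" "m \<bullet> P = 0"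
  shows "proj_eq P (meet l m)"
proof -
  have "cross3 P (cross3 l m) = (P \<bullet> m) *\<^sub>R l - (P \<bullet> l) *\<^sub>R m"
    by (simp add: vec_eq_iff forall_3 cross3_components inner_vec_def sum_3 algebra_simps)
  then show ?thesis using assms by (simp add: proj_eq_def meet_def inner_commute)
qed

lemma opposite_vertex_pairsI:
  assumes z: "proj_collinear {A, B, C}" "proj_collinear {A, Bb, Cb}" "proj_collinear {Ab, B, Cb}"
      "proj_collinear {Ab, Bb, C}"
    and nz: "\<not> proj_collinear {A, B, Bb}" "\<not> proj_collinear {A, Ab, B}" "\<not> proj_collinear {A, Ab, Bb}"
      "\<not> proj_collinear {Ab, B, Bb}"
  shows "opposite_vertex_pairs (A, Ab) (B, Bb) (C, Cb)"
proof -
  have z: "bracket A B C = 0" "bracket A Bb Cb = 0" "bracket Ab B Cb = 0" "bracket Ab Bb C = 0"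
    using z by (simp_all add: proj_collinear_3_iff)
  have nz: "bracket A B Bb \<noteq> 0" "bracket A Ab B \<noteq> 0" "bracket A Ab Bb \<noteq> 0" "bracket Ab B Bb \<noteq> 0"
    using nz by (simp_all add: proj_collinear_3_iff)
  define l1 l2 l3 l4 where "l1 = cross3 A B" and "l2 = cross3 A Bb" and "l3 = cross3 Ab B"
    and "l4 = cross3 Ab Bb"
  have "cross3 l1 l2 \<bullet> l3 = bracket A B Bb * bracket A Ab B"
    "cross3 l1 l2 \<bullet> l4 = bracket A B Bb * bracket A Ab Bb"
    "cross3 l1 l3 \<bullet> l4 = - bracket A Ab B * bracket Ab B Bb"
    "cross3 l2 l3 \<bullet> l4 = - bracket A Ab Bb * bracket Ab B Bb"
    unfolding l1_def l2_def l3_def l4_def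
    by (simp_all add: bracket_expand cross3_components inner_vec_def sum_3 algebra_simps)
  then have "complete_quadrilateral l1 l2 l3 l4"
    using nz unfolding complete_quadrilateral_def by auto
  moreover have "l1 \<bullet> A = 0" "l1 \<bullet> B = 0" "l1 \<bullet> C = 0" "l2 \<bullet> A = 0" "l2 \<bullet> Bb = 0" "l2 \<bullet> Cb = 0"
    "l3 \<bullet> Ab = 0" "l3 \<bullet> B = 0" "l3 \<bullet> Cb = 0" "l4 \<bullet> Ab = 0" "l4 \<bullet> Bb = 0" "l4 \<bullet> C = 0"
    unfolding l1_def l2_def l3_def l4_def cross3_inner_eq_bracket using z
    by (simp_all add: bracket_expand algebra_simps)
  then have "pair_eq (A, Ab) (meet l1 l2, meet l3 l4)" "pair_eq (B, Bb) (meet l1 l3, meet l2 l4)"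
    "pair_eq (C, Cb) (meet l1 l4, meet l2 l3)"
    unfolding pair_eq_def by (simp_all add: proj_eq_meet)
  ultimately show ?thesis
    unfolding opposite_vertex_pairs_def quad_opposite_pairs_def by auto
qed

lemma opposite_vertex_pairs_swap:
  "opposite_vertex_pairs X Y (c, cb) \<longleftrightarrow> opposite_vertex_pairs X Y (cb, c)"
proof -
  have swap: "pair_eq (c, cb) Q = pair_eq (cb, c) Q" for Q
    by (auto simp: pair_eq_def)
  show ?thesis
    unfolding opposite_vertex_pairs_def by (simp add: swap)
qed

lemma at_most_one_collinear_triple:
  assumes proj_distinct: "\<forall>p\<in>S. \<forall>q\<in>S. p \<noteq> q \<longrightarrow> cross3 p q \<noteq> 0"
    and no4: "\<forall>T. T \<subseteq> S \<and> card T = 4 \<longrightarrow> \<not> proj_collinear T"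
    and xyzw: "{x, y, z, w} \<subseteq> S" "distinct [x, y, z, w]"
  shows "\<not> (proj_collinear {x, y, z} \<and> proj_collinear {x, y, w})"
    "\<not> (proj_collinear {x, y, z} \<and> proj_collinear {x, z, w})"
    "\<not> (proj_collinear {x, y, z} \<and> proj_collinear {y, z, w})"
    "\<not> (proj_collinear {x, y, w} \<and> proj_collinear {x, z, w})"
    "\<not> (proj_collinear {x, y, w} \<and> proj_collinear {y, z, w})"
    "\<not> (proj_collinear {x, z, w} \<and> proj_collinear {y, z, w})"
proof -
  have two: "\<not> (proj_collinear {p, q, r} \<and> proj_collinear {p, q, s})"
    if "{p, q, r, s} = {x, y, z, w}" "distinct [p, q, r, s]" for p q r s
  proof
    assume collinear: "proj_collinear {p, q, r} \<and> proj_collinear {p, q, s}"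
    have sub: "{p, q, r, s} \<subseteq> S"
      using that(1) xyzw(1) by simp
    then have "cross3 p q \<noteq> 0"
      using proj_distinct that(2) by auto
    then have "proj_collinear {p, q, r, s}"
      using collinear by (intro proj_collinear_through_two) auto
    moreover have "card {p, q, r, s} = 4"
      using that(2) by (simp add: card_insert_if)
    ultimately show False
      using no4 sub by blast
  qed
  show "\<not> (proj_collinear {x, y, z} \<and> proj_collinear {x, y, w})"
    "\<not> (proj_collinear {x, y, z} \<and> proj_collinear {x, z, w})"
    "\<not> (proj_collinear {x, y, z} \<and> proj_collinear {y, z, w})"
    "\<not> (proj_collinear {x, y, w} \<and> proj_collinear {x, z, w})"
    "\<not> (proj_collinear {x, y, w} \<and> proj_collinear {y, z, w})"
    "\<not> (proj_collinear {x, z, w} \<and> proj_collinear {y, z, w})"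
    using xyzw(2) two[of x y z w] two[of x z y w] two[of y z x w] two[of x w y z]
      two[of y w x z] two[of z w x y]
    by (auto simp: insert_commute)
qed

text \<open>Up to relabelling the pairs, every pattern of collinear triples compatible with the
  hypotheses is covered by one of the 28 instances of the three lemmas of the previous section
  used below, or is the complete quadrilateral configuration; sat checks this.\<close>
lemma exists_regular_point:
  fixes A Ab B Bb C Cb :: pt
  defines "S \<equiv> {A, Ab, B, Bb, C, Cb}"
  assumes proj_distinct: "\<forall>p\<in>S. \<forall>q\<in>S. p \<noteq> q \<longrightarrow> cross3 p q \<noteq> 0"
    and distinct: "distinct [A, Ab, B, Bb, C, Cb]"
    and no4: "\<forall>T. T \<subseteq> S \<and> card T = 4 \<longrightarrow> \<not> proj_collinear T"
    and not_quad: "\<not> opposite_vertex_pairs (A, Ab) (B, Bb) (C, Cb)"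
  shows "\<exists>X. regular_point (conjugacy_net A Ab B Bb C Cb) X"
proof -
  let ?F = "{{A, Ab}, {B, Bb}, {C, Cb}}"
  let ?goal = "\<exists>X. regular_point (conjugacy_net A Ab B Bb C Cb) X"
  note excl = at_most_one_collinear_triple[OF proj_distinct no4]
  have generic: ?goal if "{{P, Pb}, {Q, Qb}, {R, Rb}} = ?F"
    "\<not> proj_collinear {P, Pb, Q}" "\<not> proj_collinear {P, Pb, R}" "\<not> proj_collinear {P, Q, R}"
    "\<not> proj_collinear {P, Q, Rb}" "\<not> proj_collinear {Pb, Q, R}" "\<not> proj_collinear {Pb, Qb, R}"
    for P Pb Q Qb R Rb
    using regular_point_generic[OF that(2-7)] conjugacy_net_relabel[OF that(1)] by auto
  have one_line: ?goal if "{{P, Pb}, {Q, Qb}, {R, Rb}} = ?F" "proj_collinear {P, Q, R}"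
    "\<not> proj_collinear {Pb, Qb, Rb}" "\<not> proj_collinear {Pb, Qb, R}" "\<not> proj_collinear {Qb, R, Rb}"
    "\<not> proj_collinear {P, Q, Rb}" "\<not> proj_collinear {P, R, Rb}" "\<not> proj_collinear {Pb, R, Rb}"
    for P Pb Q Qb R Rb
    using regular_point_one_line[OF that(2-8)] conjugacy_net_relabel[OF that(1)] by auto
  have four_lines: ?goal if "{{P, Pb}, {Q, Qb}, {R, Rb}} = ?F"
    "proj_collinear {P, Pb, Q}" "proj_collinear {P, Qb, R}" "proj_collinear {Pb, Qb, Rb}"
    "proj_collinear {Q, R, Rb}"
    "\<not> proj_collinear {P, Pb, Qb}" "\<not> proj_collinear {Q, Pb, Qb}" "\<not> proj_collinear {P, Q, Qb}"
    "\<not> proj_collinear {R, Pb, Qb}" "\<not> proj_collinear {P, Rb, Qb}" "\<not> proj_collinear {P, Pb, Rb}"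
    for P Pb Q Qb R Rb
    using regular_point_four_lines[OF that(2-11)] conjugacy_net_relabel[OF that(1)] by auto
  have ne: "A \<noteq> Ab" "A \<noteq> B" "A \<noteq> Bb" "A \<noteq> C" "A \<noteq> Cb" "Ab \<noteq> B" "Ab \<noteq> Bb" "Ab \<noteq> C"
    "Ab \<noteq> Cb" "B \<noteq> Bb" "B \<noteq> C" "B \<noteq> Cb" "Bb \<noteq> C" "Bb \<noteq> Cb" "C \<noteq> Cb"
    using distinct by auto
  show ?thesis
    using not_quad opposite_vertex_pairs_swap[of "(A, Ab)" "(B, Bb)" C Cb]
      opposite_vertex_pairsI[of A B C Bb Cb Ab] opposite_vertex_pairsI[of A B Cb Bb C Ab]
      excl[of A Ab B Bb] excl[of A Ab B C] excl[of A Ab B Cb] excl[of A Ab Bb C]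
      excl[of A Ab Bb Cb] excl[of A Ab C Cb] excl[of A B Bb C] excl[of A B Bb Cb]
      excl[of A B C Cb] excl[of A Bb C Cb] excl[of Ab B Bb C] excl[of Ab B Bb Cb]
      excl[of Ab B C Cb] excl[of Ab Bb C Cb] excl[of B Bb C Cb]
      generic[of A Ab B Bb C Cb] generic[of A Ab Bb B Cb C] generic[of B Bb Ab A C Cb]
      generic[of C Cb A Ab B Bb] generic[of Ab A Bb B Cb C] generic[of B Bb Ab A Cb C]
      generic[of Cb C Ab A Bb B] generic[of A Ab Bb B C Cb]
      one_line[of Ab A B Bb Cb C] one_line[of A Ab Bb B C Cb] one_line[of Ab A C Cb B Bb]
      one_line[of Ab A Cb C B Bb] one_line[of Bb B C Cb Ab A] one_line[of A Ab B Bb C Cb]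
      one_line[of A Ab B Bb Cb C] one_line[of Ab A B Bb C Cb]
      four_lines[of A Ab B Bb C Cb] four_lines[of A Ab B Bb Cb C] four_lines[of A Ab Bb B C Cb]
      four_lines[of A Ab Bb B Cb C] four_lines[of A Ab C Cb B Bb] four_lines[of A Ab C Cb Bb B]
      four_lines[of A Ab Cb C B Bb] four_lines[of A Ab Cb C Bb B] four_lines[of B Bb A Ab C Cb]
      four_lines[of B Bb A Ab Cb C] four_lines[of B Bb Ab A C Cb] four_lines[of B Bb Ab A Cb C]
    unfolding S_def
    by (simp (no_asm_use) only: insert_commute insert_subset insert_iff empty_iff empty_subsetI
        distinct.simps list.set ne simp_thms True_implies_equals) sat
qed

theorem theorem5:
  fixes A Ab B Bb C Cb :: "real^3"
  assumes points: "\<forall>p\<in>{A, Ab, B, Bb, C, Cb}. proj_point p"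
    and distinct: "\<forall>p\<in>{A, Ab, B, Bb, C, Cb}. \<forall>q\<in>{A, Ab, B, Bb, C, Cb}.
                      p \<noteq> q \<longrightarrow> \<not> proj_eq p q"
    and distinct6: "card {A, Ab, B, Bb, C, Cb} = 6"
    and no4coll: "\<forall>T. T \<subseteq> {A, Ab, B, Bb, C, Cb} \<and> card T = 4 \<longrightarrow> \<not> proj_collinear T"
    and not_quad: "\<not> opposite_vertex_pairs (A, Ab) (B, Bb) (C, Cb)"
  shows "\<exists>c. nonzero_cubic c \<and>
           (\<forall>(P, Pb)\<in>schroeter A Ab B Bb C Cb. cubic_form c P = 0 \<and> cubic_form c Pb = 0)"
proof -
  have nonzero: "A \<noteq> 0" "Ab \<noteq> 0" "B \<noteq> 0" "Bb \<noteq> 0" "C \<noteq> 0" "Cb \<noteq> 0"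
    using points by (auto simp: proj_point_def)
  have "distinct [A, Ab, B, Bb, C, Cb]"
    by (rule card_distinct) (use distinct6 in simp)
  moreover have "\<forall>p\<in>{A, Ab, B, Bb, C, Cb}. \<forall>q\<in>{A, Ab, B, Bb, C, Cb}. p \<noteq> q \<longrightarrow> cross3 p q \<noteq> 0"
    using distinct by (simp add: proj_eq_def)
  ultimately obtain X where "regular_point (conjugacy_net A Ab B Bb C Cb) X"
    using exists_regular_point no4coll not_quad by blast
  then show ?thesis
    using schroeter_on_jacobian_cubic nonzero by blast
qed

end
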